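(* Let $A$ be an algebra over a field $\Bbbk$ that admits a normalized nearly Frobenius coproduct. Then $A$ is semisimple.
   Context: Algebras are associative and unital; tensor products over $\Bbbk$; $m$ denotes multiplication. A nearly Frobenius coproduct on $A$ is a $\Bbbk$-linear map $\Delta:A\to A\otimes A$ with $\Delta\circ m=(1\otimes m)\circ(\Delta\otimes 1)=(m\otimes 1)\circ(1\otimes\Delta)$; it is normalized if $m\circ\Delta=\operatorname{Id}_A$. Semisimple means: $A$ is finite-dimensional and every left $A$-module is projective. *)

theory Defs
  imports Complex_Main
begin

definition k_algebra :: "('k::field \<Rightarrow> 'a::ring_1 \<Rightarrow> 'a) \<Rightarrow> bool" where
  "k_algebra scale \<longleftrightarrow> vector_space scale \<and>
     (\<forall>c a b. scale c (a * b) = scale c a * b) \<and>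
     (\<forall>c a b. scale c (a * b) = a * scale c b)"

text \<open>An element of A (x) A is represented by a list [(x1,y1),...,(xn,yn)] standing for the
sum of the simple tensors xi (x) yi (every tensor is such a finite sum).  Two lists represent
the same tensor iff the difference of the associated finitely supported functions
A x A -> k lies in the k-span of the bilinearity relations (the standard construction of
the tensor product as a quotient of the free vector space on A x A).\<close>

definition tens_fun :: "('a \<times> 'a) list \<Rightarrow> ('a \<times> 'a \<Rightarrow> 'k::field)" where
  "tens_fun L = (\<lambda>q. sum_list (map (\<lambda>p. if p = q then 1 else 0) L))"

definition delta :: "'a \<times> 'a \<Rightarrow> ('a \<times> 'a \<Rightarrow> 'k::field)" where
  "delta p = (\<lambda>q. if q = p then 1 else 0)"

inductive_set tens_null :: "('k::field \<Rightarrow> 'a::ring_1 \<Rightarrow> 'a) \<Rightarrow> ('a \<times> 'a \<Rightarrow> 'k) set"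
  for scale where
  zero: "(\<lambda>q. 0) \<in> tens_null scale"
| add: "f \<in> tens_null scale \<Longrightarrow> g \<in> tens_null scale \<Longrightarrow> (\<lambda>q. f q + g q) \<in> tens_null scale"
| smult: "f \<in> tens_null scale \<Longrightarrow> (\<lambda>q. c * f q) \<in> tens_null scale"
| add_left: "(\<lambda>q. delta (x + x', y) q - delta (x, y) q - delta (x', y) q) \<in> tens_null scale"
| add_right: "(\<lambda>q. delta (x, y + y') q - delta (x, y) q - delta (x, y') q) \<in> tens_null scale"
| scale_left: "(\<lambda>q. delta (scale c x, y) q - c * delta (x, y) q) \<in> tens_null scale"
| scale_right: "(\<lambda>q. delta (x, scale c y) q - c * delta (x, y) q) \<in> tens_null scale"

definition tens_eq :: "('k::field \<Rightarrow> 'a::ring_1 \<Rightarrow> 'a) \<Rightarrow> ('a \<times> 'a) list \<Rightarrow> ('a \<times> 'a) list \<Rightarrow> bool" where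
  "tens_eq scale L M \<longleftrightarrow> (\<lambda>q. tens_fun L q - tens_fun M q) \<in> tens_null scale"

definition tens_mult :: "('a::ring_1 \<times> 'a) list \<Rightarrow> 'a" where
  "tens_mult L = sum_list (map (\<lambda>(x, y). x * y) L)"

definition tens_lact :: "'a::ring_1 \<Rightarrow> ('a \<times> 'a) list \<Rightarrow> ('a \<times> 'a) list" where
  "tens_lact a L = map (\<lambda>(x, y). (a * x, y)) L"

definition tens_ract :: "('a::ring_1 \<times> 'a) list \<Rightarrow> 'a \<Rightarrow> ('a \<times> 'a) list" where
  "tens_ract L b = map (\<lambda>(x, y). (x, y * b)) L"

text \<open>Delta is k-linear; Delta o m = (1 (x) m) o (Delta (x) 1) = (m (x) 1) o (1 (x) Delta),
evaluated on simple tensors a (x) b (which span A (x) A): Delta(ab) = Delta(a) b = a Delta(b).\<close>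
definition nearly_frobenius :: "('k::field \<Rightarrow> 'a::ring_1 \<Rightarrow> 'a) \<Rightarrow> ('a \<Rightarrow> ('a \<times> 'a) list) \<Rightarrow> bool" where
  "nearly_frobenius scale \<Delta> \<longleftrightarrow>
     (\<forall>a b. tens_eq scale (\<Delta> (a + b)) (\<Delta> a @ \<Delta> b)) \<and>
     (\<forall>c a. tens_eq scale (\<Delta> (scale c a)) (map (\<lambda>(x, y). (scale c x, y)) (\<Delta> a))) \<and>
     (\<forall>a b. tens_eq scale (\<Delta> (a * b)) (tens_ract (\<Delta> a) b)) \<and>
     (\<forall>a b. tens_eq scale (\<Delta> (a * b)) (tens_lact a (\<Delta> b)))"

definition normalized_nearly_frobenius :: "('k::field \<Rightarrow> 'a::ring_1 \<Rightarrow> 'a) \<Rightarrow> ('a \<Rightarrow> ('a \<times> 'a) list) \<Rightarrow> bool" where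
  "normalized_nearly_frobenius scale \<Delta> \<longleftrightarrow>
     nearly_frobenius scale \<Delta> \<and> (\<forall>a. tens_mult (\<Delta> a) = a)"

definition lmod :: "('a::ring_1 \<Rightarrow> 'm::ab_group_add \<Rightarrow> 'm) \<Rightarrow> bool" where
  "lmod s \<longleftrightarrow> (\<forall>a x y. s a (x + y) = s a x + s a y) \<and>
              (\<forall>a b x. s (a + b) x = s a x + s b x) \<and>
              (\<forall>a b x. s (a * b) x = s a (s b x)) \<and>
              (\<forall>x. s 1 x = x)"

definition lhom :: "('a::ring_1 \<Rightarrow> 'm::ab_group_add \<Rightarrow> 'm) \<Rightarrow> ('a \<Rightarrow> 'n::ab_group_add \<Rightarrow> 'n) \<Rightarrow> ('m \<Rightarrow> 'n) \<Rightarrow> bool" where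
  "lhom sM sN f \<longleftrightarrow> (\<forall>x y. f (x + y) = f x + f y) \<and> (\<forall>a x. f (sM a x) = sN a (f x))"

text \<open>Since type variables of a theorem
are universally quantified, a theorem stating this for free 'm, 'n gives projectivity.\<close>
definition projective_lmod :: "('a::ring_1 \<Rightarrow> 'p::ab_group_add \<Rightarrow> 'p) \<Rightarrow> 'm::ab_group_add itself \<Rightarrow> 'n::ab_group_add itself \<Rightarrow> bool" where
  "projective_lmod sP _ _ \<longleftrightarrow>
     (\<forall>(sM :: 'a \<Rightarrow> 'm \<Rightarrow> 'm) (sN :: 'a \<Rightarrow> 'n \<Rightarrow> 'n) g f.
        lmod sM \<and> lmod sN \<and> lhom sM sN g \<and> surj g \<and> lhom sP sN f \<longrightarrow>
        (\<exists>h. lhom sP sM h \<and> (\<forall>x. g (h x) = f x)))"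

definition finite_dim_alg :: "('k::field \<Rightarrow> 'a::ring_1 \<Rightarrow> 'a) \<Rightarrow> bool" where
  "finite_dim_alg scale \<longleftrightarrow> (\<exists>B. finite B \<and> module.span scale B = UNIV)"

definition semisimple :: "('k::field \<Rightarrow> 'a::ring_1 \<Rightarrow> 'a) \<Rightarrow> 'p::ab_group_add itself \<Rightarrow> 'm::ab_group_add itself \<Rightarrow> 'n::ab_group_add itself \<Rightarrow> bool" where
  "semisimple scale tp tm tn \<longleftrightarrow> finite_dim_alg scale \<and>
     (\<forall>sP :: 'a \<Rightarrow> 'p \<Rightarrow> 'p. lmod sP \<longrightarrow> projective_lmod sP tm tn)"

end

theory Submission
  imports Defs
begin

text \<open>Write \<open>e = \<Delta>(1) = \<Sum> x\<^sub>i \<otimes> y\<^sub>i\<close>. The nearly Frobenius identities give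
\<open>a e = \<Delta>(a) = e a\<close> in \<open>A \<otimes> A\<close>, and normalization gives \<open>\<Sum> x\<^sub>i y\<^sub>i = 1\<close>, so \<open>e\<close> is a
separability idempotent. A k-linear map \<open>\<phi>\<close> between A-modules therefore averages to the A-linear
map \<open>p \<mapsto> \<Sum> x\<^sub>i \<phi>(y\<^sub>i p)\<close>; for \<open>\<phi> = s \<circ> f\<close>, with \<open>s\<close> a k-linear section of a surjection
\<open>g : M \<rightarrow> N\<close>, this is a lift of \<open>f : P \<rightarrow> N\<close> along \<open>g\<close>. Finite dimensionality comes from
\<open>a = \<Sum> (a x\<^sub>i) y\<^sub>i\<close>: expanding the \<open>y\<^sub>i\<close> in a basis and moving \<open>a\<close> across \<open>e\<close> shows that the
products \<open>x\<^sub>i b\<close>, for the finitely many basis vectors \<open>b\<close> occurring in the \<open>y\<^sub>i\<close>, span \<open>A\<close>.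
Equalities in \<open>A \<otimes> A\<close> are only ever used through evaluation against k-bilinear maps,
which respect the defining relations of the tensor product.\<close>

definition tens_bilinear :: "('k::field \<Rightarrow> 'a::ring_1 \<Rightarrow> 'a) \<Rightarrow> ('k \<Rightarrow> 'v::ab_group_add \<Rightarrow> 'v) \<Rightarrow> ('a \<times> 'a \<Rightarrow> 'v) \<Rightarrow> bool" where
  "tens_bilinear scale sv \<beta> \<longleftrightarrow>
     (\<forall>x x' y. \<beta> (x + x', y) = \<beta> (x, y) + \<beta> (x', y)) \<and>
     (\<forall>x y y'. \<beta> (x, y + y') = \<beta> (x, y) + \<beta> (x, y')) \<and>
     (\<forall>c x y. \<beta> (scale c x, y) = sv c (\<beta> (x, y))) \<and>
     (\<forall>c x y. \<beta> (x, scale c y) = sv c (\<beta> (x, y)))"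

definition tens_eval :: "('k::field \<Rightarrow> 'v::ab_group_add \<Rightarrow> 'v) \<Rightarrow> ('a \<times> 'a \<Rightarrow> 'v) \<Rightarrow> ('a \<times> 'a \<Rightarrow> 'k) \<Rightarrow> 'v" where
  "tens_eval sv \<beta> f = (\<Sum>q | f q \<noteq> 0. sv (f q) (\<beta> q))"

lemma tens_fun_Nil [simp]: "tens_fun [] = (\<lambda>q. 0)"
  by (simp add: tens_fun_def fun_eq_iff)

lemma tens_fun_Cons [simp]: "tens_fun (p # L) = (\<lambda>q. delta p q + tens_fun L q)"
  by (auto simp: tens_fun_def delta_def fun_eq_iff)

context vector_space
begin

lemma sum_scale_delta:
  assumes "finite S" "p \<in> S"
  shows "(\<Sum>q\<in>S. scale (delta p q) (\<beta> q)) = \<beta> p"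
proof -
  have "scale (delta p q) (\<beta> q) = (if q = p then \<beta> q else 0)" for q
    by (simp add: delta_def)
  then show ?thesis using assms by simp
qed

lemma tens_eval_eq_sum:
  assumes "finite S" "{q. f q \<noteq> 0} \<subseteq> S"
  shows "tens_eval scale \<beta> f = (\<Sum>q\<in>S. scale (f q) (\<beta> q))"
  unfolding tens_eval_def by (rule sum.mono_neutral_left) (use assms in \<open>auto intro: finite_subset\<close>)

lemma sum_scale_tens_fun:
  assumes "finite S" "set L \<subseteq> S"
  shows "(\<Sum>q\<in>S. scale (tens_fun L q) (\<beta> q)) = sum_list (map \<beta> L)"
  using assms(2)
  by (induction L) (simp_all add: scale_left_distrib sum.distrib sum_scale_delta[OF assms(1)])

lemma tens_null_eval_zero:
  assumes "tens_bilinear sA scale \<beta>" and "f \<in> tens_null sA"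
  shows "finite {q. f q \<noteq> 0} \<and> tens_eval scale \<beta> f = 0"
  using assms(2)
proof induction
  case zero
  show ?case by (simp add: tens_eval_def)
next
  case (add f g)
  let ?S = "{q. f q \<noteq> 0} \<union> {q. g q \<noteq> 0}"
  have "finite ?S" "{q. f q + g q \<noteq> 0} \<subseteq> ?S" using add by auto
  then show ?case
    using add tens_eval_eq_sum[of ?S f \<beta>] tens_eval_eq_sum[of ?S g \<beta>]
    by (auto simp: tens_eval_eq_sum[of ?S] scale_left_distrib sum.distrib intro: finite_subset)
next
  case (smult f c)
  have "{q. c * f q \<noteq> 0} \<subseteq> {q. f q \<noteq> 0}" by auto
  then show ?case
    using smult by (auto simp: tens_eval_eq_sum[of "{q. f q \<noteq> 0}"] scale_sum_right[symmetric]
        simp flip: scale_scale intro: finite_subset)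
next
  case (add_left x x' y)
  let ?S = "{(x + x', y), (x, y), (x', y)}"
  have "{q. delta (x + x', y) q - delta (x, y) q - delta (x', y) q \<noteq> (0::'a)} \<subseteq> ?S"
    by (auto simp: delta_def)
  with assms(1) show ?case
    by (auto simp: tens_eval_eq_sum[of ?S] scale_left_diff_distrib sum_subtractf sum_scale_delta
        tens_bilinear_def intro: finite_subset)
next
  case (add_right x y y')
  let ?S = "{(x, y + y'), (x, y), (x, y')}"
  have "{q. delta (x, y + y') q - delta (x, y) q - delta (x, y') q \<noteq> (0::'a)} \<subseteq> ?S"
    by (auto simp: delta_def)
  with assms(1) show ?case
    by (auto simp: tens_eval_eq_sum[of ?S] scale_left_diff_distrib sum_subtractf sum_scale_delta
        tens_bilinear_def intro: finite_subset)
next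
  case (scale_left c x y)
  let ?S = "{(sA c x, y), (x, y)}"
  have "{q. delta (sA c x, y) q - c * delta (x, y) q \<noteq> (0::'a)} \<subseteq> ?S"
    by (auto simp: delta_def)
  with assms(1) show ?case
    by (auto simp: tens_eval_eq_sum[of ?S] scale_left_diff_distrib sum_subtractf sum_scale_delta
        scale_sum_right[symmetric] tens_bilinear_def simp flip: scale_scale intro: finite_subset)
next
  case (scale_right x c y)
  let ?S = "{(x, sA c y), (x, y)}"
  have "{q. delta (x, sA c y) q - c * delta (x, y) q \<noteq> (0::'a)} \<subseteq> ?S"
    by (auto simp: delta_def)
  with assms(1) show ?case
    by (auto simp: tens_eval_eq_sum[of ?S] scale_left_diff_distrib sum_subtractf sum_scale_delta
        scale_sum_right[symmetric] tens_bilinear_def simp flip: scale_scale intro: finite_subset)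
qed

lemma tens_eq_sum_list_eq:
  assumes "tens_bilinear sA scale \<beta>" and "tens_eq sA L M"
  shows "sum_list (map \<beta> L) = sum_list (map \<beta> M)"
proof -
  let ?f = "\<lambda>q. tens_fun L q - tens_fun M q :: 'a"
  from tens_null_eval_zero[OF assms(1) assms(2)[unfolded tens_eq_def]]
  have fin: "finite {q. ?f q \<noteq> 0}" and zero: "tens_eval scale \<beta> ?f = 0" by auto
  define S where "S = set L \<union> set M \<union> {q. ?f q \<noteq> 0}"
  have S: "finite S" "{q. ?f q \<noteq> 0} \<subseteq> S" "set L \<subseteq> S" "set M \<subseteq> S"
    using fin by (auto simp: S_def)
  have "0 = (\<Sum>q\<in>S. scale (?f q) (\<beta> q))"
    using zero S by (simp add: tens_eval_eq_sum)
  also have "\<dots> = sum_list (map \<beta> L) - sum_list (map \<beta> M)"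
    using S by (simp add: scale_left_diff_distrib sum_subtractf sum_scale_tens_fun)
  finally show ?thesis by simp
qed

end

lemma nearly_frobenius_delta_one_central:
  assumes "nearly_frobenius scale \<Delta>" and "vector_space sv" and "tens_bilinear scale sv \<beta>"
  shows "sum_list (map \<beta> (tens_ract (\<Delta> 1) a)) = sum_list (map \<beta> (tens_lact a (\<Delta> 1)))"
proof -
  have r: "tens_eq scale (\<Delta> a) (tens_ract (\<Delta> 1) a)"
    using assms(1) unfolding nearly_frobenius_def by (metis mult_1_left)
  have l: "tens_eq scale (\<Delta> a) (tens_lact a (\<Delta> 1))"
    using assms(1) unfolding nearly_frobenius_def by (metis mult_1_right)
  show ?thesis
    using vector_space.tens_eq_sum_list_eq[OF assms(2,3) r] vector_space.tens_eq_sum_list_eq[OF assms(2,3) l]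
    by simp
qed

lemma sum_list_map_additive:
  fixes f :: "'a::monoid_add \<Rightarrow> 'b::ab_group_add"
  assumes "\<And>u v. f (u + v) = f u + f v"
  shows "f (sum_list xs) = sum_list (map f xs)"
proof -
  have "f 0 = 0" using assms[of 0 0] by simp
  then show ?thesis by (induction xs) (simp_all add: assms)
qed

lemma k_algebra_mult_scale:
  assumes "k_algebra scale"
  shows "scale c a * b = scale c (a * b)" and "a * scale c b = scale c (a * b)"
  using assms unfolding k_algebra_def by metis+

definition restrict_scalars :: "('k::field \<Rightarrow> 'a::ring_1 \<Rightarrow> 'a) \<Rightarrow> ('a \<Rightarrow> 'm \<Rightarrow> 'm) \<Rightarrow> 'k \<Rightarrow> 'm \<Rightarrow> 'm" where
  "restrict_scalars scale sM c x = sM (scale c 1) x"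

lemma lmod_scale:
  assumes alg: "k_algebra scale" and M: "lmod sM"
  shows "sM (scale c a) x = restrict_scalars scale sM c (sM a x)"
    and "sM a (restrict_scalars scale sM c x) = restrict_scalars scale sM c (sM a x)"
proof -
  have "sM (scale c 1 * a) x = sM (scale c 1) (sM a x)" and "sM (a * scale c 1) x = sM a (sM (scale c 1) x)"
    using M by (simp_all add: lmod_def)
  then show "sM (scale c a) x = restrict_scalars scale sM c (sM a x)"
    and "sM a (restrict_scalars scale sM c x) = restrict_scalars scale sM c (sM a x)"
    by (simp_all add: restrict_scalars_def k_algebra_mult_scale[OF alg])
qed

lemma vector_space_restrict_scalars:
  assumes "k_algebra scale" and "lmod sM"
  shows "vector_space (restrict_scalars scale sM)"
proof -
  interpret vector_space scale using assms(1) by (simp add: k_algebra_def)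
  note sM = assms(2)[unfolded lmod_def]
  have "scale (a * b) 1 = scale a 1 * scale b 1" for a b
    by (simp add: k_algebra_mult_scale[OF assms(1)])
  then have "sM (scale (a * b) 1) x = sM (scale a 1) (sM (scale b 1) x)" for a b x
    using sM by simp
  moreover have "sM (scale (a + b) 1) x = sM (scale a 1) x + sM (scale b 1) x" for a b x
    using sM by (simp only: scale_left_distrib)
  ultimately show ?thesis
    using sM unfolding vector_space_def restrict_scalars_def by simp
qed

lemma lhom_linear_restrict_scalars:
  assumes "k_algebra scale" and "lmod sM" and "lmod sN" and "lhom sM sN f"
  shows "Vector_Spaces.linear (restrict_scalars scale sM) (restrict_scalars scale sN) f"
  using assms by (simp add: Vector_Spaces.linear_iff vector_space_restrict_scalars lhom_def
      restrict_scalars_def)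

lemma surj_lhom_linear_section:
  assumes "k_algebra scale" and "lmod sM" and "lmod sN" and "lhom sM sN g" and "surj g"
  obtains s where "Vector_Spaces.linear (restrict_scalars scale sN) (restrict_scalars scale sM) s"
    and "\<And>y. g (s y) = y"
proof -
  interpret vector_space_pair "restrict_scalars scale sM" "restrict_scalars scale sN"
    using assms by (simp add: vector_space_pair_def vector_space_restrict_scalars)
  from linear_surjective_right_inverse assms that show ?thesis
    by (metis comp_apply id_apply lhom_linear_restrict_scalars)
qed

definition average :: "('a \<Rightarrow> 'm::ab_group_add \<Rightarrow> 'm) \<Rightarrow> ('a \<Rightarrow> 'p \<Rightarrow> 'p) \<Rightarrow> ('a \<times> 'a) list \<Rightarrow> ('p \<Rightarrow> 'm) \<Rightarrow> 'p \<Rightarrow> 'm" where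
  "average sM sP e \<phi> p = sum_list (map (\<lambda>(x, y). sM x (\<phi> (sP y p))) e)"

lemma lhom_average:
  assumes alg: "k_algebra scale" and nf: "nearly_frobenius scale \<Delta>"
    and P: "lmod sP" and M: "lmod sM"
    and lin: "Vector_Spaces.linear (restrict_scalars scale sP) (restrict_scalars scale sM) \<phi>"
  shows "lhom sP sM (average sM sP (\<Delta> 1) \<phi>)"
proof -
  have \<phi>: "\<phi> (x + y) = \<phi> x + \<phi> y" "\<phi> (restrict_scalars scale sP c x) = restrict_scalars scale sM c (\<phi> x)"
    for x y c using lin by (simp_all add: Vector_Spaces.linear_iff)
  note sP = P[unfolded lmod_def] and sM = M[unfolded lmod_def]
  define \<beta> where "\<beta> p = (\<lambda>(x, y). sM x (\<phi> (sP y p)))" for p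
  have "tens_bilinear scale (restrict_scalars scale sM) (\<beta> p)" for p
    unfolding tens_bilinear_def \<beta>_def
    using sP sM \<phi> by (simp add: lmod_scale[OF alg P] lmod_scale[OF alg M])
  then have "sum_list (map (\<beta> p) (tens_ract (\<Delta> 1) a)) = sum_list (map (\<beta> p) (tens_lact a (\<Delta> 1)))"
    for p a by (rule nearly_frobenius_delta_one_central[OF nf vector_space_restrict_scalars[OF alg M]])
  then have "average sM sP (\<Delta> 1) \<phi> (sP a p) = sM a (average sM sP (\<Delta> 1) \<phi> p)" for a p
    unfolding average_def tens_ract_def tens_lact_def \<beta>_def
    using sP sM by (simp add: o_def split_def sum_list_map_additive[of "sM a"])
  moreover have "average sM sP (\<Delta> 1) \<phi> (p + q) = average sM sP (\<Delta> 1) \<phi> p + average sM sP (\<Delta> 1) \<phi> q"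
    for p q unfolding average_def using sP sM \<phi> by (simp add: split_def sum_list_addf)
  ultimately show ?thesis unfolding lhom_def by simp
qed

lemma average_lift:
  assumes N: "lmod sN" and g: "lhom sM sN g" and f: "lhom sP sN f"
    and lift: "\<And>p. g (\<phi> p) = f p" and unit: "tens_mult e = 1"
  shows "g (average sM sP e \<phi> p) = f p"
proof -
  note sN = N[unfolded lmod_def] and g' = g[unfolded lhom_def] and f' = f[unfolded lhom_def]
  have "g (average sM sP e \<phi> p) = sum_list (map (\<lambda>(x, y). sN (x * y) (f p)) e)"
    unfolding average_def using g' f' sN
    by (simp add: sum_list_map_additive[of g] split_def o_def lift)
  also have "\<dots> = sN (tens_mult e) (f p)"
    unfolding tens_mult_def using sN by (simp add: sum_list_map_additive[of "\<lambda>a. sN a (f p)"] split_def o_def)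
  finally show ?thesis using unit sN by simp
qed

lemma projective_lmod_if_normalized_nearly_frobenius:
  fixes scale :: "'k::field \<Rightarrow> 'a::ring_1 \<Rightarrow> 'a" and sP :: "'a \<Rightarrow> 'p::ab_group_add \<Rightarrow> 'p"
  assumes alg: "k_algebra scale" and nnf: "normalized_nearly_frobenius scale \<Delta>" and P: "lmod sP"
  shows "projective_lmod sP TYPE('m::ab_group_add) TYPE('n::ab_group_add)"
  unfolding projective_lmod_def
proof (intro allI impI, elim conjE)
  fix sM :: "'a \<Rightarrow> 'm \<Rightarrow> 'm" and sN :: "'a \<Rightarrow> 'n \<Rightarrow> 'n" and g f
  assume M: "lmod sM" and N: "lmod sN" and g: "lhom sM sN g" and "surj g" and f: "lhom sP sN f"
  then obtain s where s: "Vector_Spaces.linear (restrict_scalars scale sN) (restrict_scalars scale sM) s"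
    and gs: "\<And>y. g (s y) = y"
    using surj_lhom_linear_section[OF alg] by metis
  have "Vector_Spaces.linear (restrict_scalars scale sP) (restrict_scalars scale sM) (s \<circ> f)"
    using Vector_Spaces.linear_compose[OF lhom_linear_restrict_scalars[OF alg P N f] s] .
  then have "lhom sP sM (average sM sP (\<Delta> 1) (s \<circ> f))"
    using lhom_average[OF alg _ P M] nnf unfolding normalized_nearly_frobenius_def by blast
  moreover have "g (average sM sP (\<Delta> 1) (s \<circ> f) p) = f p" for p
    using average_lift[OF N g f] gs nnf unfolding normalized_nearly_frobenius_def by simp
  ultimately show "\<exists>h. lhom sP sM h \<and> (\<forall>x. g (h x) = f x)" by blast
qed

lemma (in module) span_sum_list:
  assumes "\<And>p. p \<in> set xs \<Longrightarrow> f p \<in> span S"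
  shows "sum_list (map f xs) \<in> span S"
  using assms by (induction xs) (simp_all add: span_zero span_add)

lemma span_mult_right:
  assumes "k_algebra scale" and "z \<in> module.span scale X"
  shows "z * b \<in> module.span scale ((\<lambda>x. x * b) ` X)"
proof -
  have "module_hom scale scale (\<lambda>x. x * b)"
    using assms(1) unfolding k_algebra_def
    by (simp add: module_hom_iff module_iff_vector_space distrib_right)
  then show ?thesis
    using assms(2) by (simp add: module_hom.span_image)
qed

lemma nearly_frobenius_functional_span:
  assumes alg: "k_algebra scale" and nf: "nearly_frobenius scale \<Delta>"
    and \<phi>: "Vector_Spaces.linear scale (*) \<phi>"
  shows "(\<Sum>(x, y)\<leftarrow>\<Delta> 1. scale (\<phi> y) (a * x)) \<in> module.span scale (fst ` set (\<Delta> 1))"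
proof -
  interpret vector_space scale using alg by (simp add: k_algebra_def)
  have "tens_bilinear scale scale (\<lambda>(x, y). scale (\<phi> y) x)"
    using \<phi> by (simp add: tens_bilinear_def Vector_Spaces.linear_iff scale_left_distrib scale_right_distrib)
  from nearly_frobenius_delta_one_central[OF nf vector_space_axioms this]
  have "(\<Sum>(x, y)\<leftarrow>\<Delta> 1. scale (\<phi> y) (a * x)) = (\<Sum>(x, y)\<leftarrow>\<Delta> 1. scale (\<phi> (y * a)) x)"
    by (simp add: tens_ract_def tens_lact_def o_def split_def)
  also have "\<dots> \<in> span (fst ` set (\<Delta> 1))"
    by (rule span_sum_list) (force intro: span_scale span_base)
  finally show ?thesis .
qed

lemma finite_dim_alg_if_normalized_nearly_frobenius:
  assumes alg: "k_algebra scale" and nnf: "normalized_nearly_frobenius scale \<Delta>"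
  shows "finite_dim_alg scale"
proof -
  interpret vector_space scale using alg by (simp add: k_algebra_def)
  have nf: "nearly_frobenius scale \<Delta>" and unit: "tens_mult (\<Delta> 1) = 1"
    using nnf unfolding normalized_nearly_frobenius_def by auto
  obtain B where B: "independent B" "span B = UNIV"
    using basis_exists[of UNIV] by (metis top.extremum_uniqueI)
  define e where "e = \<Delta> 1"
  define F where "F = (\<Union>y\<in>snd ` set e. {b. representation B y b \<noteq> 0})"
  define G where "G = (\<lambda>(x, b). x * b) ` (fst ` set e \<times> F)"
  have "finite F" by (auto simp: F_def finite_representation)
  then have "finite G" by (simp add: G_def)
  have expand: "y = (\<Sum>b\<in>F. scale (representation B y b) b)" if "y \<in> snd ` set e" for y
  proof -
    have "y = (\<Sum>b | representation B y b \<noteq> 0. scale (representation B y b) b)"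
      using B by (simp add: sum_nonzero_representation_eq)
    also have "\<dots> = (\<Sum>b\<in>F. scale (representation B y b) b)"
      by (rule sum.mono_neutral_left) (use \<open>finite F\<close> that in \<open>auto simp: F_def\<close>)
    finally show ?thesis .
  qed
  have "a \<in> span G" for a
  proof -
    have "a = (\<Sum>(x, y)\<leftarrow>e. (a * x) * y)"
      using unit by (simp add: e_def tens_mult_def sum_list_const_mult split_def o_def mult.assoc)
    also have "\<dots> = (\<Sum>(x, y)\<leftarrow>e. \<Sum>b\<in>F. scale (representation B y b) (a * x) * b)"
    proof (intro arg_cong[where f = sum_list] map_cong refl, clarify)
      fix x y assume "(x, y) \<in> set e"
      then have "a * x * y = a * x * (\<Sum>b\<in>F. scale (representation B y b) b)"
        using expand by force
      then show "a * x * y = (\<Sum>b\<in>F. scale (representation B y b) (a * x) * b)"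
        by (simp add: sum_distrib_left k_algebra_mult_scale[OF alg])
    qed
    also have "\<dots> = (\<Sum>b\<in>F. (\<Sum>(x, y)\<leftarrow>e. scale (representation B y b) (a * x)) * b)"
      by (induction e) (simp_all add: split_def sum.distrib distrib_right)
    also have "\<dots> \<in> span G"
    proof (rule span_sum)
      fix b assume "b \<in> F"
      have "(\<Sum>(x, y)\<leftarrow>e. scale (representation B y b) (a * x)) \<in> span (fst ` set e)"
        unfolding e_def using B
        by (intro nearly_frobenius_functional_span[OF alg nf] linear_representation)
      then have "(\<Sum>(x, y)\<leftarrow>e. scale (representation B y b) (a * x)) * b \<in> span ((\<lambda>x. x * b) ` fst ` set e)"
        by (rule span_mult_right[OF alg])
      also have "\<dots> \<subseteq> span G"
        using \<open>b \<in> F\<close> by (intro span_mono) (auto simp: G_def)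
      finally show "(\<Sum>(x, y)\<leftarrow>e. scale (representation B y b) (a * x)) * b \<in> span G" .
    qed
    finally show ?thesis .
  qed
  then show ?thesis
    unfolding finite_dim_alg_def using \<open>finite G\<close> by blast
qed

theorem corollary30:
  fixes scale :: "'k::field \<Rightarrow> 'a::ring_1 \<Rightarrow> 'a"
    and \<Delta> :: "'a \<Rightarrow> ('a \<times> 'a) list"
  assumes "k_algebra scale"
    and "normalized_nearly_frobenius scale \<Delta>"
  shows "semisimple scale TYPE('p::ab_group_add) TYPE('m::ab_group_add) TYPE('n::ab_group_add)"
  unfolding semisimple_def
  using finite_dim_alg_if_normalized_nearly_frobenius[OF assms]
    projective_lmod_if_normalized_nearly_frobenius[OF assms] by blast

end
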